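(* The plane cannot be tiled by copies of the tooth alone, where the tooth is the $9$-omino consisting of a central unit square together with two unit squares extending in a straight line from it in each of the four directions (up, down, left, right).
   Context: The tooth is the plus-shaped $9$-omino: with centre square $[0,1]\times[0,1]$, it consists of the squares $[i,i+1]\times[0,1]$ for $i\in\{-2,-1,0,1,2\}$ and $[0,1]\times[j,j+1]$ for $j\in\{-2,-1,1,2\}$. A tiling of the plane by copies of a polyomino is a covering of $\mathbb{R}^2$ by copies with pairwise disjoint interiors. *)

theory Defs
  imports "HOL-Analysis.Analysis"
begin

definition unit_sq :: "int \<Rightarrow> int \<Rightarrow> (real \<times> real) set" where
  "unit_sq i j = {real_of_int i .. real_of_int i + 1} \<times> {real_of_int j .. real_of_int j + 1}"

definition tooth :: "(real \<times> real) set" where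
  "tooth = (\<Union>i\<in>{-2..2}. unit_sq i 0) \<union> (\<Union>j\<in>{-2,-1,1,2}. unit_sq 0 j)"

text \<open>Isometries of the plane (distance preserving maps; these are exactly the
  rigid motions, including reflections).\<close>
definition plane_isometry :: "(real \<times> real \<Rightarrow> real \<times> real) \<Rightarrow> bool" where
  "plane_isometry f \<longleftrightarrow> (\<forall>x y. dist (f x) (f y) = dist x y)"

definition is_copy :: "(real \<times> real) set \<Rightarrow> (real \<times> real) set \<Rightarrow> bool" where
  "is_copy P A \<longleftrightarrow> (\<exists>f. plane_isometry f \<and> A = f ` P)"

definition tiles_plane :: "(real \<times> real) set \<Rightarrow> bool" where
  "tiles_plane P \<longleftrightarrow> (\<exists>\<T>. (\<forall>A\<in>\<T>. is_copy P A) \<and> \<Union>\<T> = UNIV \<and>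
      (\<forall>A\<in>\<T>. \<forall>B\<in>\<T>. A \<noteq> B \<longrightarrow> interior A \<inter> interior B = {}))"

end

theory Submission
  imports Defs
begin

(* Normalise a tiling so that it contains the tooth itself.  At each concave corner p of the
  tooth, e.g. p = (0, 1), the tooth covers three of the four quadrants near p, so some other tile
  T contains p and meets the free quadrant, and the interior of T near p lies in that closed
  quadrant.  Pulling back along the isometry onto T, a whole unit cell of the tooth is mapped
  into the quadrant; hence the linear part of the isometry is a signed permutation, T is a
  translate of the tooth (which is invariant under these maps), and p is a corner at the end of
  one of the two arms of T facing the quadrant.  So each of the four concave corners of the
  tooth admits two tiles; excluding overlaps leaves the two pinwheel arrangements, and in each
  of them the concave corner between the tooth and a neighbouring tile admits no tile at all. *)

section \<open>Plane isometries\<close>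

lemma plane_isometry_affine:
  assumes "plane_isometry f"
  obtains L c where "orthogonal_transformation L" "f = (\<lambda>x. c + L x)"
proof
  show "orthogonal_transformation (\<lambda>x. f x - f 0)"
    using assms unfolding orthogonal_transformation_isometry plane_isometry_def
    by (simp add: dist_norm)
  show "f = (\<lambda>x. f 0 + (f x - f 0))" by simp
qed

lemma plane_isometry_bij:
  assumes "plane_isometry f"
  shows "bij f"
proof -
  obtain L c where L: "orthogonal_transformation L" and f: "f = (\<lambda>x. c + L x)"
    using plane_isometry_affine[OF assms] .
  have "bij L" "bij ((+) c)"
    using orthogonal_transformation_inj[OF L] orthogonal_transformation_surj[OF L]
    by (auto intro: bijI simp: bij_plus)
  then have "bij ((+) c \<circ> L)" by (intro bij_comp) simp_all
  then show ?thesis by (simp add: f comp_def)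
qed

lemma plane_isometry_inv:
  assumes "plane_isometry f"
  shows "plane_isometry (inv f)"
  unfolding plane_isometry_def
proof (intro allI)
  fix x y
  have "f (inv f x) = x" "f (inv f y) = y"
    using plane_isometry_bij[OF assms] by (simp_all add: bij_def surj_f_inv_f)
  then show "dist (inv f x) (inv f y) = dist x y"
    using assms unfolding plane_isometry_def by metis
qed

lemma plane_isometry_comp:
  "plane_isometry f \<Longrightarrow> plane_isometry g \<Longrightarrow> plane_isometry (f \<circ> g)"
  unfolding plane_isometry_def comp_def by metis

lemma
  assumes "plane_isometry f"
  shows interior_plane_isometry_image: "interior (f ` S) = f ` interior S"
    and closure_plane_isometry_image: "closure (f ` S) = f ` closure S"
proof -
  obtain L c where L: "orthogonal_transformation L" and f: "f = (\<lambda>x. c + L x)"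
    using plane_isometry_affine[OF assms] .
  have lin: "linear L" and inj: "inj L"
    using L by (simp_all add: orthogonal_transformation_linear orthogonal_transformation_inj)
  have img: "f ` T = (+) c ` L ` T" for T by (auto simp: f)
  show "interior (f ` S) = f ` interior S"
    by (simp only: img interior_translation interior_injective_linear_image[OF lin inj])
  show "closure (f ` S) = f ` closure S"
    by (simp only: img closure_translation closure_injective_linear_image[OF lin inj])
qed

lemma dist_le_abs_sum: "dist x y \<le> \<bar>fst x - fst y\<bar> + \<bar>snd x - snd y\<bar>"
  for x y :: "real \<times> real"
  using sqrt_sum_squares_le_sum_abs[of "fst x - fst y" "snd x - snd y"]
  by (simp add: dist_prod_def dist_real_def)

section \<open>The tooth\<close>

lemma tooth_eq: "tooth = {-2..3} \<times> {0..1} \<union> {0..1} \<times> {-2..3}"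
proof -
  have "{-2..2::int} = {-2, -1, 0, 1, 2}" by auto
  then show ?thesis unfolding tooth_def unit_sq_def by (auto simp: mem_Times_iff)
qed

lemma mem_unit_sq:
  "x \<in> unit_sq a b \<longleftrightarrow>
    of_int a \<le> fst x \<and> fst x \<le> of_int a + 1 \<and> of_int b \<le> snd x \<and> snd x \<le> of_int b + 1"
  unfolding unit_sq_def by (cases x) auto

lemma interior_unit_sq:
  "interior (unit_sq a b) = {of_int a<..<of_int a + 1} \<times> {of_int b<..<of_int b + 1}"
  unfolding unit_sq_def interior_Times interior_atLeastAtMost_real ..

lemma closure_interior_unit_sq: "closure (interior (unit_sq a b)) = unit_sq a b"
  unfolding interior_unit_sq closure_Times by (simp add: unit_sq_def)

lemma convex_unit_sq: "convex (unit_sq a b)"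
  unfolding unit_sq_def by (intro convex_Times convex_real_interval)

lemma tooth_cellE:
  assumes "u \<in> tooth"
  obtains a b where "unit_sq a b \<subseteq> tooth" "u \<in> unit_sq a b"
  using assms unfolding tooth_def by blast

lemma compact_tooth: "compact tooth"
  unfolding tooth_eq by (intro compact_Un compact_Times compact_Icc)

lemma closure_interior_tooth: "closure (interior tooth) = tooth"
proof
  show "closure (interior tooth) \<subseteq> tooth"
    by (intro closure_minimal interior_subset compact_imp_closed compact_tooth)
  show "tooth \<subseteq> closure (interior tooth)"
  proof
    fix u assume "u \<in> tooth"
    then obtain a b where "unit_sq a b \<subseteq> tooth" "u \<in> unit_sq a b" by (rule tooth_cellE)
    then show "u \<in> closure (interior tooth)"
      using closure_mono[OF interior_mono] closure_interior_unit_sq by blast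
  qed
qed

definition inner_tooth :: "(real \<times> real) set" where
  "inner_tooth = {-2<..<3} \<times> {0<..<1} \<union> {0<..<1} \<times> {-2<..<3}"

lemma inner_tooth_subset_interior: "inner_tooth \<subseteq> interior tooth"
  by (rule interior_maximal) (auto simp: inner_tooth_def tooth_eq intro!: open_Un open_Times)

lemma dist_tooth_centre:
  assumes "x \<in> tooth"
  shows "dist x (1/2, 1/2) \<le> 3"
proof -
  have "\<bar>fst x - 1/2\<bar> + \<bar>snd x - 1/2\<bar> \<le> 3"
    using assms unfolding tooth_eq by (auto simp: mem_Times_iff)
  then show ?thesis using dist_le_abs_sum[of x "(1/2, 1/2)"] by simp
qed

lemma ball_centre_subset_interior_tooth: "ball (1/2, 1/2) (1/2) \<subseteq> interior tooth"
proof
  fix x :: "real \<times> real"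
  assume "x \<in> ball (1/2, 1/2) (1/2)"
  then have "\<bar>fst x - 1/2\<bar> < 1/2" "\<bar>snd x - 1/2\<bar> < 1/2"
    using dist_fst_le[of x "(1/2, 1/2)"] dist_snd_le[of x "(1/2, 1/2)"]
    by (auto simp: dist_real_def dist_commute)
  then have "x \<in> inner_tooth" by (auto simp: inner_tooth_def mem_Times_iff)
  then show "x \<in> interior tooth" using inner_tooth_subset_interior by blast
qed

definition reflect :: "real \<Rightarrow> real \<Rightarrow> real \<times> real \<Rightarrow> real \<times> real" where
  "reflect s1 s2 x = (s1 * (fst x - 1/2) + 1/2, s2 * (snd x - 1/2) + 1/2)"

lemma reflect_reflect: "\<bar>s1\<bar> = 1 \<Longrightarrow> \<bar>s2\<bar> = 1 \<Longrightarrow> reflect s1 s2 (reflect s1 s2 x) = x"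
  unfolding reflect_def by (auto simp: abs_if prod_eq_iff split: if_splits)

lemma reflect_mem_tooth: "\<bar>s1\<bar> = 1 \<Longrightarrow> \<bar>s2\<bar> = 1 \<Longrightarrow> reflect s1 s2 x \<in> tooth \<longleftrightarrow> x \<in> tooth"
  unfolding reflect_def tooth_eq by (auto simp: abs_if mem_Times_iff split: if_splits)

lemma swap_mem_tooth: "prod.swap x \<in> tooth \<longleftrightarrow> x \<in> tooth"
  unfolding tooth_eq by (auto simp: mem_Times_iff)

lemma unit_sq_subset_tooth:
  assumes "i \<in> {-2..2}"
  shows "unit_sq i 0 \<subseteq> tooth" "unit_sq 0 i \<subseteq> tooth"
  using assms by (auto simp: tooth_eq unit_sq_def)

lemma lower_end_of_arm:
  fixes x :: real
  assumes "-2 \<le> x" "x \<le> 3"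
    and "\<And>i. i \<in> {-2..2} \<Longrightarrow> of_int i \<le> x \<Longrightarrow> x \<le> of_int i + 1 \<Longrightarrow> x \<le> of_int i"
  shows "x = -2"
proof (rule ccontr)
  assume "x \<noteq> -2"
  define i where "i = \<lceil>x\<rceil> - 1"
  have "of_int i < x" "x \<le> of_int i + 1"
    using ceiling_correct[of x] by (auto simp: i_def)
  moreover have "i \<in> {-2..2}"
    using assms(1,2) \<open>x \<noteq> -2\<close> by (auto simp: i_def ceiling_le_iff less_ceiling_iff)
  ultimately show False using assms(3)[of i] by simp
qed

lemma tooth_lower_left_corner:
  assumes "u \<in> tooth"
    and corner: "\<And>a b. unit_sq a b \<subseteq> tooth \<Longrightarrow> u \<in> unit_sq a b \<Longrightarrow>
      fst u \<le> of_int a \<and> snd u \<le> of_int b"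
  shows "u = (-2, 0) \<or> u = (0, -2)"
proof -
  consider "fst u \<in> {-2..3}" "snd u \<in> {0..1}" | "fst u \<in> {0..1}" "snd u \<in> {-2..3}"
    using assms(1) unfolding tooth_eq by (cases u) auto
  then show ?thesis
  proof cases
    case 1
    have "fst u = -2"
      using 1 corner[OF unit_sq_subset_tooth(1)] by (intro lower_end_of_arm) (auto simp: mem_unit_sq)
    then have "snd u \<le> 0"
      using 1 corner[OF unit_sq_subset_tooth(1), of "-2"] by (simp add: mem_unit_sq)
    then show ?thesis using 1 \<open>fst u = -2\<close> by (simp add: prod_eq_iff)
  next
    case 2
    have "snd u = -2"
      using 2 corner[OF unit_sq_subset_tooth(2)] by (intro lower_end_of_arm) (auto simp: mem_unit_sq)
    then have "fst u \<le> 0"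
      using 2 corner[OF unit_sq_subset_tooth(2), of "-2"] by (simp add: mem_unit_sq)
    then show ?thesis using 2 \<open>snd u = -2\<close> by (simp add: prod_eq_iff)
  qed
qed

section \<open>Tilings\<close>

definition tiling :: "(real \<times> real) set \<Rightarrow> (real \<times> real) set set \<Rightarrow> bool" where
  "tiling P \<T> \<longleftrightarrow> (\<forall>A\<in>\<T>. is_copy P A) \<and> \<Union>\<T> = UNIV \<and>
    pairwise (\<lambda>A B. interior A \<inter> interior B = {}) \<T>"

lemma tiles_plane_iff_tiling: "tiles_plane P \<longleftrightarrow> (\<exists>\<T>. tiling P \<T>)"
  unfolding tiles_plane_def tiling_def pairwise_def ..

lemma is_copy_isometry_image:
  assumes "is_copy P A" "plane_isometry g"
  shows "is_copy P (g ` A)"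
proof -
  obtain f where "plane_isometry f" "A = f ` P"
    using assms(1) unfolding is_copy_def by blast
  then have "plane_isometry (g \<circ> f)" "g ` A = (g \<circ> f) ` P"
    using plane_isometry_comp[OF assms(2)] by (auto simp: image_comp)
  then show ?thesis unfolding is_copy_def by blast
qed

lemma tiling_isometry_image:
  assumes "tiling P \<T>" "plane_isometry g"
  shows "tiling P ((`) g ` \<T>)"
proof -
  have "bij g" by (rule plane_isometry_bij[OF assms(2)])
  then have "inj g" "surj g" by (simp_all add: bij_is_inj bij_is_surj)
  have "\<Union>((`) g ` \<T>) = UNIV"
    using assms(1) \<open>surj g\<close> unfolding tiling_def by (simp add: image_Union[symmetric])
  moreover have "interior (g ` A) \<inter> interior (g ` B) = {}"
    if "A \<in> \<T>" "B \<in> \<T>" "g ` A \<noteq> g ` B" for A B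
  proof -
    have "interior A \<inter> interior B = {}"
      using assms(1) that unfolding tiling_def pairwise_def by blast
    then show ?thesis
      by (simp add: interior_plane_isometry_image[OF assms(2)] image_Int[OF \<open>inj g\<close>, symmetric])
  qed
  ultimately show ?thesis
    using assms is_copy_isometry_image unfolding tiling_def pairwise_image
    by (auto simp: pairwise_def)
qed

lemma tiling_containing_prototile:
  assumes "tiling P \<T>"
  obtains \<T>' where "tiling P \<T>'" "P \<in> \<T>'"
proof -
  obtain A where "A \<in> \<T>" using assms unfolding tiling_def by blast
  then obtain f where f: "plane_isometry f" "A = f ` P"
    using assms unfolding tiling_def is_copy_def by blast
  have "inv f ` A = P"
    using f plane_isometry_bij by (simp add: image_inv_f_f bij_is_inj)
  then show thesis
    using that[OF tiling_isometry_image[OF assms plane_isometry_inv[OF f(1)]]] \<open>A \<in> \<T>\<close> by blast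
qed

lemma closure_interior_copy:
  assumes "is_copy P A" "closure (interior P) = P"
  shows "closure (interior A) = A"
proof -
  obtain f where "plane_isometry f" "A = f ` P"
    using assms(1) unfolding is_copy_def by blast
  then show ?thesis
    using assms(2) by (simp add: interior_plane_isometry_image closure_plane_isometry_image)
qed

lemma tiling_interior_disjoint:
  assumes "tiling P \<T>" "closure (interior P) = P" "A \<in> \<T>" "B \<in> \<T>" "A \<noteq> B"
  shows "interior A \<inter> B = {}"
proof -
  have "interior A \<inter> interior B = {}"
    using assms unfolding tiling_def pairwise_def by blast
  moreover have "B = closure (interior B)"
    using assms closure_interior_copy unfolding tiling_def by metis
  ultimately show ?thesis
    using open_Int_closure_eq_empty[OF open_interior] by metis
qed

lemma finite_family_disjoint_interiors:
  assumes "finite G" "pairwise (\<lambda>A B. interior A \<inter> interior B = {}) \<A>"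
    and "\<And>A. A \<in> \<A> \<Longrightarrow> interior A \<inter> G \<noteq> {}"
  shows "finite \<A>"
proof -
  define h where "h A = (SOME g. g \<in> interior A \<inter> G)" for A
  have h: "h A \<in> interior A \<inter> G" if "A \<in> \<A>" for A
    using assms(3)[OF that] unfolding h_def by (meson ex_in_conv someI_ex)
  have "inj_on h \<A>"
  proof (rule inj_onI)
    fix A B assume "A \<in> \<A>" "B \<in> \<A>" "h A = h B"
    then have "interior A \<inter> interior B \<noteq> {}" using h by (metis IntD1 disjoint_iff)
    then show "A = B" using assms(2) \<open>A \<in> \<A>\<close> \<open>B \<in> \<A>\<close> unfolding pairwise_def by blast
  qed
  moreover have "h ` \<A> \<subseteq> G" using h by blast
  ultimately show ?thesis using assms(1) inj_on_finite by blast
qed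

lemma copy_of_tooth_centre:
  assumes "is_copy tooth A"
  obtains c where "ball c (1/2) \<subseteq> interior A" "A \<subseteq> cball c 3"
proof -
  obtain f where f: "plane_isometry f" "A = f ` tooth"
    using assms unfolding is_copy_def by blast
  have dist_f: "dist (f x) (f y) = dist x y" for x y
    using f(1) unfolding plane_isometry_def by blast
  have "ball (f (1/2, 1/2)) (1/2) \<subseteq> f ` ball (1/2, 1/2) (1/2)"
  proof
    fix y assume y: "y \<in> ball (f (1/2, 1/2)) (1/2)"
    obtain x where "y = f x"
      using plane_isometry_bij[OF f(1)] by (metis bij_pointE)
    with y have "x \<in> ball (1/2, 1/2) (1/2)" by (simp add: dist_f)
    then show "y \<in> f ` ball (1/2, 1/2) (1/2)" using \<open>y = f x\<close> by blast
  qed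
  also have "\<dots> \<subseteq> interior A"
    using ball_centre_subset_interior_tooth f
    by (simp add: interior_plane_isometry_image image_mono)
  finally have "ball (f (1/2, 1/2)) (1/2) \<subseteq> interior A" .
  moreover have "A \<subseteq> cball (f (1/2, 1/2)) 3"
    using dist_tooth_centre by (auto simp: f(2) dist_f dist_commute)
  ultimately show thesis by (rule that)
qed

lemma quarter_floor_near: "\<bar>of_int \<lfloor>4 * x\<rfloor> / 4 - x\<bar> < 1/4"
  for x :: real
  using floor_correct[of "4 * x"] by linarith

lemma quarter_floor_range:
  fixes x y :: real
  assumes "\<bar>x - y\<bar> < 4"
  shows "\<lfloor>4 * x\<rfloor> \<in> {\<lfloor>4 * y\<rfloor> - 17..\<lfloor>4 * y\<rfloor> + 17}"
proof -
  have "\<lfloor>4 * y\<rfloor> - 17 < \<lfloor>4 * x\<rfloor> \<and> \<lfloor>4 * x\<rfloor> < \<lfloor>4 * y\<rfloor> + 17"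
    using assms floor_correct[of "4 * x"] floor_correct[of "4 * y"] by linarith
  then show ?thesis by simp
qed

lemma finite_tiles_meeting_ball:
  assumes "tiling tooth \<T>"
  shows "finite {A\<in>\<T>. A \<inter> ball p 1 \<noteq> {}}"
proof (rule finite_family_disjoint_interiors)
  define window where "window t = {\<lfloor>4 * t\<rfloor> - 17..\<lfloor>4 * t\<rfloor> + 17}" for t :: real
  define quarter where "quarter = (\<lambda>(i, j). (of_int i / 4 :: real, of_int j / 4 :: real))"
  show "finite (quarter ` (window (fst p) \<times> window (snd p)))"
    by (simp add: window_def)
  show "pairwise (\<lambda>A B. interior A \<inter> interior B = {}) {A\<in>\<T>. A \<inter> ball p 1 \<noteq> {}}"
    using assms unfolding tiling_def by (auto intro: pairwise_subset)
  fix A assume A: "A \<in> {A\<in>\<T>. A \<inter> ball p 1 \<noteq> {}}"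
  then obtain c where c: "ball c (1/2) \<subseteq> interior A" "A \<subseteq> cball c 3"
    using assms copy_of_tooth_centre unfolding tiling_def by blast
  obtain y where "y \<in> A" "dist p y < 1" using A by auto
  then have "dist c p < 4" using c(2) dist_triangle[of c p y] by (auto simp: dist_commute)
  then have "\<bar>fst c - fst p\<bar> < 4" "\<bar>snd c - snd p\<bar> < 4"
    using dist_fst_le[of c p] dist_snd_le[of c p] by (simp_all add: dist_real_def)
  \<comment> \<open>Rounding the centre c down to the grid of quarters gives a point of the interior of A;
    distinct tiles get distinct points, and all of them lie in a fixed finite window.\<close>
  define k where "k = (\<lfloor>4 * fst c\<rfloor>, \<lfloor>4 * snd c\<rfloor>)"
  have "dist (quarter k) c < 1/2"
    using dist_le_abs_sum[of "quarter k" c] quarter_floor_near[of "fst c"]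
      quarter_floor_near[of "snd c"]
    by (simp add: quarter_def k_def)
  then have "quarter k \<in> interior A" using c(1) by (auto simp: dist_commute)
  moreover have "k \<in> window (fst p) \<times> window (snd p)"
    using quarter_floor_range \<open>\<bar>fst c - fst p\<bar> < 4\<close> \<open>\<bar>snd c - snd p\<bar> < 4\<close>
    unfolding k_def window_def by blast
  ultimately show "interior A \<inter> quarter ` (window (fst p) \<times> window (snd p)) \<noteq> {}"
    by blast
qed

lemma tile_through_limit_point:
  assumes closed: "\<And>A. A \<in> \<T> \<Longrightarrow> closed A" and cover: "\<Union>\<T> = UNIV"
    and fin: "finite {A\<in>\<T>. A \<inter> ball p r \<noteq> {}}"
    and lim: "p \<in> closure (ball p r - \<Union>\<K>)"
  obtains T where "T \<in> \<T>" "T \<notin> \<K>" "p \<in> T"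
proof -
  define \<F> where "\<F> = {A\<in>\<T> - \<K>. A \<inter> ball p r \<noteq> {}}"
  have "closed (\<Union>\<F>)"
    using closed by (intro closed_Union finite_subset[OF _ fin]) (auto simp: \<F>_def)
  moreover have "ball p r - \<Union>\<K> \<subseteq> \<Union>\<F>"
    using cover unfolding \<F>_def by blast
  ultimately have "p \<in> \<Union>\<F>" using lim closure_minimal by blast
  then show thesis using that unfolding \<F>_def by blast
qed

section \<open>Tiles at a corner\<close>

definition quadrant :: "real \<Rightarrow> real \<Rightarrow> real \<times> real \<Rightarrow> (real \<times> real) set" where
  "quadrant s1 s2 p = {z. 0 \<le> s1 * (fst z - fst p) \<and> 0 \<le> s2 * (snd z - snd p)}"

lemma closed_quadrant: "closed (quadrant s1 s2 p)"
  unfolding quadrant_def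
  by (intro closed_Collect_conj closed_Collect_le continuous_on_const continuous_on_mult
      continuous_on_diff continuous_on_fst continuous_on_snd continuous_on_id)

lemma mem_quadrant_iff: "z \<in> quadrant s1 s2 p \<longleftrightarrow> z - p \<in> quadrant s1 s2 0"
  by (simp add: quadrant_def)

lemma scaleR_mem_quadrant_iff:
  "0 < t \<Longrightarrow> t *\<^sub>R v \<in> quadrant s1 s2 0 \<longleftrightarrow> v \<in> quadrant s1 s2 0"
proof -
  assume "0 < t"
  then have "0 \<le> s * (t * x) \<longleftrightarrow> 0 \<le> s * x" for s x :: real
    by (metis mult.left_commute mult_nonneg_nonneg mult_pos_neg not_le order_less_le zero_le_mult_iff)
  then show ?thesis by (simp add: quadrant_def)
qed

lemma cell_image_in_quadrant:
  assumes f: "plane_isometry f" and cell: "unit_sq a b \<subseteq> tooth" "u \<in> unit_sq a b"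
    and near: "interior (f ` tooth) \<inter> ball (f u) 1 \<subseteq> quadrant s1 s2 (f u)"
  shows "f ` unit_sq a b \<subseteq> quadrant s1 s2 (f u)"
proof -
  obtain L c where L: "orthogonal_transformation L" and f_eq: "f = (\<lambda>x. c + L x)"
    using plane_isometry_affine[OF f] .
  have lin: "linear L" using L by (rule orthogonal_transformation_linear)
  have f_diff: "f x - f u = L (x - u)" for x
    by (simp add: f_eq linear_diff[OF lin])
  have "f x \<in> quadrant s1 s2 (f u)" if x: "x \<in> interior (unit_sq a b)" for x
  proof -
    \<comment> \<open>Shrinking x towards u to y keeps it in the open cell and brings f y within distance 1
      of f u; as the quadrant is a cone with apex f u, membership transfers from f y to f x.\<close>
    define e where "e = 1 / (norm (x - u) + 2)"
    have "0 < norm (x - u) + 2" by (simp add: add_nonneg_pos)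
    then have e: "0 < e" "e \<le> 1" "e * norm (x - u) < 1"
      unfolding e_def by (simp_all add: divide_simps)
    define y where "y = u - e *\<^sub>R (u - x)"
    have "y - u = e *\<^sub>R (x - u)" by (simp add: y_def algebra_simps)
    then have fy: "f y - f u = e *\<^sub>R L (x - u)" by (simp add: f_diff linear_scale[OF lin])
    have "y \<in> interior (unit_sq a b)"
      unfolding y_def by (rule mem_interior_convex_shrink[OF convex_unit_sq x cell(2) e(1,2)])
    then have "f y \<in> interior (f ` tooth)"
      using interior_mono[OF cell(1)] by (auto simp: interior_plane_isometry_image[OF f])
    moreover have "f y \<in> ball (f u) 1"
      using e orthogonal_transformation_norm[OF L]
      by (simp add: dist_norm norm_minus_commute[of "f u"] fy)
    ultimately have "f y \<in> quadrant s1 s2 (f u)" using near by blast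
    then have "e *\<^sub>R L (x - u) \<in> quadrant s1 s2 0"
      by (simp add: mem_quadrant_iff[of "f y"] fy)
    then show ?thesis
      by (simp add: mem_quadrant_iff[of "f x"] f_diff scaleR_mem_quadrant_iff[OF e(1)])
  qed
  then have "closure (f ` interior (unit_sq a b)) \<subseteq> quadrant s1 s2 (f u)"
    by (intro closure_minimal closed_quadrant) blast
  then show ?thesis
    by (simp add: closure_plane_isometry_image[OF f] closure_interior_unit_sq)
qed

lemma sign_eq_if_square_eq_one:
  fixes s x :: real
  assumes "\<bar>s\<bar> = 1" "0 \<le> s * x" "x\<^sup>2 = 1"
  shows "x = s"
  using assms by (auto simp: abs_if power2_eq_1_iff zero_le_mult_iff split: if_splits)

lemma orthonormal_pair_in_quadrant:
  fixes v w :: "real \<times> real"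
  assumes s: "\<bar>s1\<bar> = 1" "\<bar>s2\<bar> = 1"
    and vw: "v \<in> quadrant s1 s2 0" "w \<in> quadrant s1 s2 0"
    and "norm v = 1" "norm w = 1" "v \<bullet> w = 0"
  shows "(v = (s1, 0) \<and> w = (0, s2)) \<or> (v = (0, s2) \<and> w = (s1, 0))"
proof -
  have ss: "s1 * s1 = 1" "s2 * s2 = 1" using s by (auto simp: abs_if split: if_splits)
  have signs: "0 \<le> s1 * fst v" "0 \<le> s2 * snd v" "0 \<le> s1 * fst w" "0 \<le> s2 * snd w"
    using vw by (simp_all add: quadrant_def)
  have "fst v * fst w = (s1 * fst v) * (s1 * fst w)" "snd v * snd w = (s2 * snd v) * (s2 * snd w)"
    using ss by algebra+
  then have "0 \<le> fst v * fst w" "0 \<le> snd v * snd w"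
    using signs by (metis mult_nonneg_nonneg)+
  moreover have "fst v * fst w + snd v * snd w = 0"
    using \<open>v \<bullet> w = 0\<close> by (simp add: inner_prod_def)
  ultimately have zero: "fst v * fst w = 0" "snd v * snd w = 0" by linarith+
  have norm1: "(fst v)\<^sup>2 + (snd v)\<^sup>2 = 1" "(fst w)\<^sup>2 + (snd w)\<^sup>2 = 1"
    using \<open>norm v = 1\<close> \<open>norm w = 1\<close> by (simp_all add: norm_prod_def)
  show ?thesis
  proof (cases "fst v = 0")
    case True
    then have "snd v = s2"
      using sign_eq_if_square_eq_one[OF s(2) signs(2)] norm1(1) by simp
    then have "snd w = 0" using zero(2) s(2) by auto
    then have "fst w = s1"
      using sign_eq_if_square_eq_one[OF s(1) signs(3)] norm1(2) by simp
    then show ?thesis using True \<open>snd v = s2\<close> \<open>snd w = 0\<close> by (simp add: prod_eq_iff)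
  next
    case False
    then have "fst w = 0" using zero(1) by simp
    then have "snd w = s2"
      using sign_eq_if_square_eq_one[OF s(2) signs(4)] norm1(2) by simp
    then have "snd v = 0" using zero(2) s(2) by auto
    then have "fst v = s1"
      using sign_eq_if_square_eq_one[OF s(1) signs(1)] norm1(1) by simp
    then show ?thesis using \<open>fst w = 0\<close> \<open>snd w = s2\<close> \<open>snd v = 0\<close> by (simp add: prod_eq_iff)
  qed
qed

definition tooth_at :: "real \<times> real \<Rightarrow> (real \<times> real) set" where
  "tooth_at c = (+) c ` tooth"

lemma mem_tooth_at: "z \<in> tooth_at c \<longleftrightarrow> z - c \<in> tooth"
  unfolding tooth_at_def by (force simp: algebra_simps)

lemma image_eq_tooth_at:
  assumes "surj f" "\<And>x. f x - c \<in> tooth \<longleftrightarrow> x \<in> tooth"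
  shows "f ` tooth = tooth_at c"
proof (intro set_eqI iffI)
  fix z assume "z \<in> tooth_at c"
  moreover obtain x where "z = f x" using assms(1) by (metis surjD)
  ultimately show "z \<in> f ` tooth" using assms(2) by (simp add: mem_tooth_at)
qed (use assms(2) in \<open>auto simp: mem_tooth_at\<close>)

lemma plane_isometry_reflect:
  assumes "\<bar>s1\<bar> = 1" "\<bar>s2\<bar> = 1"
  shows "plane_isometry (\<lambda>x. c + reflect s1 s2 x)"
  unfolding plane_isometry_def
proof (intro allI)
  fix x y :: "real \<times> real"
  have "(c + reflect s1 s2 x) - (c + reflect s1 s2 y) = (s1 * (fst x - fst y), s2 * (snd x - snd y))"
    by (simp add: reflect_def algebra_simps)
  then show "dist (c + reflect s1 s2 x) (c + reflect s1 s2 y) = dist x y"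
    using assms by (simp add: dist_norm norm_prod_def abs_mult)
qed

lemma half_step_in_unit_interval:
  fixes a x :: real
  assumes "a \<le> x" "x \<le> a + 1"
  obtains \<sigma> where "\<bar>\<sigma>\<bar> = 1" "a \<le> x + \<sigma> / 2" "x + \<sigma> / 2 \<le> a + 1"
proof (cases "x \<le> a + 1/2")
  case True
  then show thesis using that[of 1] assms by simp
next
  case False
  then show thesis using that[of "-1"] assms by simp
qed

lemma orthogonal_transformation_quadrant_cases:
  assumes L: "orthogonal_transformation L" and s: "\<bar>s1\<bar> = 1" "\<bar>s2\<bar> = 1"
    and \<sigma>: "\<bar>\<sigma>1\<bar> = 1" "\<bar>\<sigma>2\<bar> = 1"
    and quadrant: "\<sigma>1 *\<^sub>R L (1, 0) \<in> quadrant s1 s2 0" "\<sigma>2 *\<^sub>R L (0, 1) \<in> quadrant s1 s2 0"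
  obtains e1 e2 where "\<bar>e1\<bar> = 1" "\<bar>e2\<bar> = 1" "\<And>x. L x = (e1 * fst x, e2 * snd x)"
    | e1 e2 where "\<bar>e1\<bar> = 1" "\<bar>e2\<bar> = 1" "\<And>x. L x = (e1 * snd x, e2 * fst x)"
proof -
  have lin: "linear L" using L by (rule orthogonal_transformation_linear)
  have L_eq: "L x = fst x *\<^sub>R L (1, 0) + snd x *\<^sub>R L (0, 1)" for x
  proof -
    have "x = fst x *\<^sub>R (1, 0) + snd x *\<^sub>R (0, 1)" by (simp add: prod_eq_iff)
    then show ?thesis by (metis linear_add[OF lin] linear_scale[OF lin])
  qed
  have \<sigma>\<sigma>: "\<sigma>1 * \<sigma>1 = 1" "\<sigma>2 * \<sigma>2 = 1" using \<sigma> by (auto simp: abs_if split: if_splits)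
  have "norm (\<sigma>1 *\<^sub>R L (1, 0)) = 1" "norm (\<sigma>2 *\<^sub>R L (0, 1)) = 1"
    using \<sigma> orthogonal_transformation_norm[OF L] by simp_all
  moreover have "(\<sigma>1 *\<^sub>R L (1, 0)) \<bullet> (\<sigma>2 *\<^sub>R L (0, 1)) = 0"
    using L unfolding orthogonal_transformation_def by simp
  ultimately consider "\<sigma>1 *\<^sub>R L (1, 0) = (s1, 0)" "\<sigma>2 *\<^sub>R L (0, 1) = (0, s2)"
    | "\<sigma>1 *\<^sub>R L (1, 0) = (0, s2)" "\<sigma>2 *\<^sub>R L (0, 1) = (s1, 0)"
    using orthonormal_pair_in_quadrant[OF s quadrant] by blast
  then show thesis
  proof cases
    case 1
    then have "L (1, 0) = (\<sigma>1 * s1, 0)" "L (0, 1) = (0, \<sigma>2 * s2)"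
      using \<sigma>\<sigma> by (metis scaleR_scaleR scaleR_one scaleR_Pair real_scaleR_def mult_zero_right)+
    then have "L x = (\<sigma>1 * s1 * fst x, \<sigma>2 * s2 * snd x)" for x
      by (simp add: L_eq[of x])
    then show thesis
      using that(1)[of "\<sigma>1 * s1" "\<sigma>2 * s2"] s \<sigma> by (simp add: abs_mult)
  next
    case 2
    then have "L (1, 0) = (0, \<sigma>1 * s2)" "L (0, 1) = (\<sigma>2 * s1, 0)"
      using \<sigma>\<sigma> by (metis scaleR_scaleR scaleR_one scaleR_Pair real_scaleR_def mult_zero_right)+
    then have "L x = (\<sigma>2 * s1 * snd x, \<sigma>1 * s2 * fst x)" for x
      by (simp add: L_eq[of x])
    then show thesis
      using that(2)[of "\<sigma>2 * s1" "\<sigma>1 * s2"] s \<sigma> by (simp add: abs_mult)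
  qed
qed

lemma cell_in_quadrant_imp_tooth_at:
  assumes f: "plane_isometry f" and s: "\<bar>s1\<bar> = 1" "\<bar>s2\<bar> = 1" and u: "u \<in> unit_sq a b"
    and cell: "f ` unit_sq a b \<subseteq> quadrant s1 s2 (f u)"
  shows "f ` tooth = tooth_at (f (1/2, 1/2) - (1/2, 1/2))"
proof -
  obtain L c where L: "orthogonal_transformation L" and f_eq: "f = (\<lambda>x. c + L x)"
    using plane_isometry_affine[OF f] .
  have lin: "linear L" using L by (rule orthogonal_transformation_linear)
  have f_diff: "f x - f y = L (x - y)" for x y
    by (simp add: f_eq linear_diff[OF lin])
  have step: "\<sigma> *\<^sub>R L v \<in> quadrant s1 s2 0" if "u + (\<sigma> / 2) *\<^sub>R v \<in> unit_sq a b" for \<sigma> v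
  proof -
    have "f (u + (\<sigma> / 2) *\<^sub>R v) - f u \<in> quadrant s1 s2 0"
      using cell that mem_quadrant_iff by blast
    then have "(1 / 2) *\<^sub>R (\<sigma> *\<^sub>R L v) \<in> quadrant s1 s2 0"
      by (simp add: f_diff linear_scale[OF lin])
    then show ?thesis using scaleR_mem_quadrant_iff[of "1/2" "\<sigma> *\<^sub>R L v"] by simp
  qed
  have u_bounds: "of_int a \<le> fst u" "fst u \<le> of_int a + 1" "of_int b \<le> snd u" "snd u \<le> of_int b + 1"
    using u by (simp_all add: mem_unit_sq)
  obtain \<sigma>1 where \<sigma>1: "\<bar>\<sigma>1\<bar> = 1" "\<sigma>1 *\<^sub>R L (1, 0) \<in> quadrant s1 s2 0"
  proof -
    obtain \<sigma> where "\<bar>\<sigma>\<bar> = 1" "of_int a \<le> fst u + \<sigma> / 2" "fst u + \<sigma> / 2 \<le> of_int a + 1"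
      using half_step_in_unit_interval[OF u_bounds(1,2)] .
    then show thesis using that step[of \<sigma> "(1, 0)"] u_bounds by (simp add: mem_unit_sq)
  qed
  obtain \<sigma>2 where \<sigma>2: "\<bar>\<sigma>2\<bar> = 1" "\<sigma>2 *\<^sub>R L (0, 1) \<in> quadrant s1 s2 0"
  proof -
    obtain \<sigma> where "\<bar>\<sigma>\<bar> = 1" "of_int b \<le> snd u + \<sigma> / 2" "snd u + \<sigma> / 2 \<le> of_int b + 1"
      using half_step_in_unit_interval[OF u_bounds(3,4)] .
    then show thesis using that step[of \<sigma> "(0, 1)"] u_bounds by (simp add: mem_unit_sq)
  qed
  define h :: "real \<times> real" where "h = (1/2, 1/2)"
  have f_centre: "f x - (f h - h) = h + L (x - h)" for x
    using f_diff[of x h] by (simp add: algebra_simps)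
  have "f x - (f h - h) \<in> tooth \<longleftrightarrow> x \<in> tooth" for x
    using L s \<sigma>1(1) \<sigma>2(1) \<sigma>1(2) \<sigma>2(2)
  proof (cases rule: orthogonal_transformation_quadrant_cases)
    case (1 e1 e2)
    then have "f x - (f h - h) = reflect e1 e2 x"
      unfolding f_centre by (simp add: reflect_def h_def)
    then show ?thesis using reflect_mem_tooth[OF 1(1,2)] by simp
  next
    case (2 e1 e2)
    then have "f x - (f h - h) = reflect e1 e2 (prod.swap x)"
      unfolding f_centre by (simp add: reflect_def h_def)
    then show ?thesis using reflect_mem_tooth[OF 2(1,2)] swap_mem_tooth by simp
  qed
  then show ?thesis
    using image_eq_tooth_at plane_isometry_bij[OF f] bij_is_surj unfolding h_def by blast
qed

lemma tooth_at_corner: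
  assumes s: "\<bar>s1\<bar> = 1" "\<bar>s2\<bar> = 1" and p: "p \<in> tooth_at c"
    and near: "interior (tooth_at c) \<inter> ball p 1 \<subseteq> quadrant s1 s2 p"
  shows "c = p - reflect s1 s2 (-2, 0) \<or> c = p - reflect s1 s2 (0, -2)"
proof -
  \<comment> \<open>Composing with the reflection turns the quadrant into the positive one, so the preimage u
    of p must be the lower left corner of every cell of the tooth containing it.\<close>
  define f where "f x = c + reflect s1 s2 x" for x
  have f: "plane_isometry f" unfolding f_def using plane_isometry_reflect[OF s] .
  have img: "f ` tooth = tooth_at c"
    using image_eq_tooth_at plane_isometry_bij[OF f] reflect_mem_tooth[OF s]
    unfolding f_def by (simp add: bij_is_surj)
  define u where "u = reflect s1 s2 (p - c)"
  have fu: "f u = p" by (simp add: f_def u_def reflect_reflect[OF s])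
  have "u \<in> tooth" using p by (simp add: u_def reflect_mem_tooth[OF s] mem_tooth_at)
  moreover have "fst u \<le> of_int a \<and> snd u \<le> of_int b"
    if cell: "unit_sq a b \<subseteq> tooth" "u \<in> unit_sq a b" for a b
  proof -
    have "interior (f ` tooth) \<inter> ball (f u) 1 \<subseteq> quadrant s1 s2 (f u)"
      using near by (simp add: img fu)
    moreover have "(of_int a, of_int b) \<in> unit_sq a b" by (simp add: mem_unit_sq)
    ultimately have "f (of_int a, of_int b) \<in> quadrant s1 s2 p"
      using cell_image_in_quadrant[OF f cell] fu by blast
    moreover have "s1 = 1 \<or> s1 = -1" "s2 = 1 \<or> s2 = -1" using s by auto
    ultimately show ?thesis
      by (auto simp: quadrant_def f_def reflect_def fu[symmetric])
  qed
  ultimately have "u = (-2, 0) \<or> u = (0, -2)" by (rule tooth_lower_left_corner)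
  moreover have "c = p - reflect s1 s2 u" using fu by (simp add: f_def eq_diff_eq)
  ultimately show ?thesis by auto
qed

lemma copy_at_quadrant_corner:
  assumes "is_copy tooth T" "p \<in> T" and s: "\<bar>s1\<bar> = 1" "\<bar>s2\<bar> = 1"
    and near: "interior T \<inter> ball p 1 \<subseteq> quadrant s1 s2 p"
  shows "T = tooth_at (p - reflect s1 s2 (-2, 0)) \<or> T = tooth_at (p - reflect s1 s2 (0, -2))"
proof -
  obtain f where f: "plane_isometry f" "T = f ` tooth"
    using assms(1) unfolding is_copy_def by blast
  obtain u where u: "u \<in> tooth" "f u = p" using assms(2) f(2) by blast
  obtain a b where cell: "unit_sq a b \<subseteq> tooth" "u \<in> unit_sq a b"
    using tooth_cellE[OF u(1)] .
  have "f ` unit_sq a b \<subseteq> quadrant s1 s2 (f u)"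
    using cell_image_in_quadrant[OF f(1) cell] near f(2) u(2) by simp
  then have T: "T = tooth_at (f (1/2, 1/2) - (1/2, 1/2))"
    using cell_in_quadrant_imp_tooth_at[OF f(1) s cell(2)] f(2) by simp
  show ?thesis
    using tooth_at_corner[OF s, of p "f (1/2, 1/2) - (1/2, 1/2)"] assms(2) near
    unfolding T by auto
qed

lemma closure_ball_diff_quadrant_apex:
  fixes p :: "real \<times> real"
  assumes s: "\<bar>s1\<bar> = 1" "\<bar>s2\<bar> = 1"
    and avoid: "\<And>y. y \<in> S \<Longrightarrow> dist p y < 1 \<Longrightarrow>
      \<not> (0 < s1 * (fst y - fst p) \<and> 0 < s2 * (snd y - snd p))"
  shows "p \<in> closure (ball p 1 - S)"
  unfolding closure_approachable
proof (intro allI impI)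
  fix e :: real assume "0 < e"
  define t where "t = min e 1 / 3"
  have t: "0 < t" "2 * t < min e 1" using \<open>0 < e\<close> by (auto simp: t_def)
  define q where "q = (fst p + s1 * t, snd p + s2 * t)"
  have "dist q p < min e 1"
    using dist_le_abs_sum[of q p] s t by (simp add: q_def abs_mult)
  then have "dist q p < e" "dist p q < 1" by (simp_all add: dist_commute)
  moreover have "0 < s1 * (fst q - fst p) \<and> 0 < s2 * (snd q - snd p)"
    using s t(1) by (auto simp: q_def abs_if split: if_splits)
  then have "q \<notin> S" using avoid[of q] \<open>dist p q < 1\<close> by blast
  ultimately show "\<exists>y\<in>ball p 1 - S. dist y p < e" by auto
qed

lemma tiling_tooth_closed:
  assumes "tiling tooth \<T>" "A \<in> \<T>"
  shows "closed A"
proof -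
  have "closure (interior A) = A"
    using assms closure_interior_copy[OF _ closure_interior_tooth] unfolding tiling_def by blast
  then show ?thesis by (metis closed_closure)
qed

lemma corner_tile:
  assumes \<T>: "tiling tooth \<T>" and s: "\<bar>s1\<bar> = 1" "\<bar>s2\<bar> = 1" and "\<K> \<subseteq> \<T>"
    and cover: "ball p 1 - quadrant s1 s2 p \<subseteq> \<Union>\<K>"
    and avoid: "\<And>y. y \<in> \<Union>\<K> \<Longrightarrow> dist p y < 1 \<Longrightarrow>
      \<not> (0 < s1 * (fst y - fst p) \<and> 0 < s2 * (snd y - snd p))"
  shows "tooth_at (p - reflect s1 s2 (-2, 0)) \<in> \<T> \<or> tooth_at (p - reflect s1 s2 (0, -2)) \<in> \<T>"
proof -
  have "\<Union>\<T> = UNIV" using \<T> unfolding tiling_def by blast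
  then obtain T where T: "T \<in> \<T>" "T \<notin> \<K>" "p \<in> T"
    using tile_through_limit_point tiling_tooth_closed[OF \<T>] finite_tiles_meeting_ball[OF \<T>]
      closure_ball_diff_quadrant_apex[OF s avoid] by blast
  have "interior T \<inter> ball p 1 \<subseteq> quadrant s1 s2 p"
  proof
    fix z assume z: "z \<in> interior T \<inter> ball p 1"
    show "z \<in> quadrant s1 s2 p"
    proof (rule ccontr)
      assume "z \<notin> quadrant s1 s2 p"
      then obtain K where "K \<in> \<K>" "z \<in> K" using cover z by blast
      moreover have "interior T \<inter> K = {}"
        using tiling_interior_disjoint[OF \<T> closure_interior_tooth T(1)] \<open>K \<in> \<K>\<close> \<open>\<K> \<subseteq> \<T>\<close> T(2)
        by blast
      ultimately show False using z by blast
    qed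
  qed
  then show ?thesis
    using copy_at_quadrant_corner[OF _ T(3) s] T(1) \<T> unfolding tiling_def by metis
qed

(* The neighbourhood of p is enlarged to an open square, so that for explicit translates the
  hypotheses become linear arithmetic. *)
lemma corner_tile_translates:
  assumes \<T>: "tiling tooth \<T>" and s: "\<bar>s1\<bar> = 1" "\<bar>s2\<bar> = 1"
    and known: "\<And>c. c \<in> C \<Longrightarrow> tooth_at c \<in> \<T>"
    and cover: "\<And>y. \<bar>fst y - fst p\<bar> < 1 \<Longrightarrow> \<bar>snd y - snd p\<bar> < 1 \<Longrightarrow>
      \<not> (0 \<le> s1 * (fst y - fst p) \<and> 0 \<le> s2 * (snd y - snd p)) \<Longrightarrow> \<exists>c\<in>C. y - c \<in> tooth"
    and avoid: "\<And>c y. c \<in> C \<Longrightarrow> y - c \<in> tooth \<Longrightarrow> \<bar>fst y - fst p\<bar> < 1 \<Longrightarrow>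
      \<bar>snd y - snd p\<bar> < 1 \<Longrightarrow> \<not> (0 < s1 * (fst y - fst p) \<and> 0 < s2 * (snd y - snd p))"
    and c: "c1 = p - reflect s1 s2 (-2, 0)" "c2 = p - reflect s1 s2 (0, -2)"
  shows "tooth_at c1 \<in> \<T> \<or> tooth_at c2 \<in> \<T>"
  unfolding c
proof (rule corner_tile[OF \<T> s, of "tooth_at ` C"])
  have box: "\<bar>fst y - fst p\<bar> < 1" "\<bar>snd y - snd p\<bar> < 1" if "dist p y < 1" for y
    using that dist_fst_le[of y p] dist_snd_le[of y p] by (simp_all add: dist_real_def dist_commute)
  show "tooth_at ` C \<subseteq> \<T>" using known by blast
  show "ball p 1 - quadrant s1 s2 p \<subseteq> \<Union>(tooth_at ` C)"
  proof
    fix y assume y: "y \<in> ball p 1 - quadrant s1 s2 p"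
    then have "dist p y < 1" "\<not> (0 \<le> s1 * (fst y - fst p) \<and> 0 \<le> s2 * (snd y - snd p))"
      by (simp_all add: quadrant_def)
    then obtain c where "c \<in> C" "y - c \<in> tooth"
      using cover[OF box] by blast
    then show "y \<in> \<Union>(tooth_at ` C)" by (auto simp: mem_tooth_at)
  qed
  show "\<not> (0 < s1 * (fst y - fst p) \<and> 0 < s2 * (snd y - snd p))"
    if y: "y \<in> \<Union>(tooth_at ` C)" "dist p y < 1" for y
  proof -
    obtain c where "c \<in> C" "y - c \<in> tooth" using y(1) mem_tooth_at by blast
    then show ?thesis using avoid box y(2) by blast
  qed
qed

lemma tooth_at_inj:
  assumes "tooth_at c = tooth_at d"
  shows "c = d"
proof -
  have "c + (-2, 0) \<in> tooth_at c" "c + (0, -2) \<in> tooth_at c"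
    "d + (-2, 0) \<in> tooth_at d" "d + (0, -2) \<in> tooth_at d"
    by (simp_all add: mem_tooth_at tooth_eq)
  then have "c + (-2, 0) \<in> tooth_at d" "c + (0, -2) \<in> tooth_at d"
    "d + (-2, 0) \<in> tooth_at c" "d + (0, -2) \<in> tooth_at c"
    by (simp_all add: assms)
  then show ?thesis by (auto simp: mem_tooth_at tooth_eq prod_eq_iff)
qed

lemma mem_interior_tooth_at: "z \<in> interior (tooth_at c) \<longleftrightarrow> z - c \<in> interior tooth"
  unfolding tooth_at_def interior_translation by (force simp: algebra_simps)

lemma tiling_tooth_at_eqI:
  assumes "tiling tooth \<T>" "tooth_at c \<in> \<T>" "tooth_at d \<in> \<T>"
    and "z - c \<in> inner_tooth" "z - d \<in> inner_tooth"
  shows "c = d"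
proof -
  have "z \<in> interior (tooth_at c) \<inter> interior (tooth_at d)"
    using assms(4,5) inner_tooth_subset_interior by (auto simp: mem_interior_tooth_at)
  then have "tooth_at c = tooth_at d"
    using assms(1-3) unfolding tiling_def pairwise_def by blast
  then show ?thesis by (rule tooth_at_inj)
qed

section \<open>Pinwheels\<close>

lemma tooth_neighbours:
  assumes \<T>: "tiling tooth \<T>" and "tooth \<in> \<T>"
  shows "tooth_at (-3, 1) \<in> \<T> \<or> tooth_at (-1, 3) \<in> \<T>"
    and "tooth_at (3, 1) \<in> \<T> \<or> tooth_at (1, 3) \<in> \<T>"
    and "tooth_at (3, -1) \<in> \<T> \<or> tooth_at (1, -3) \<in> \<T>"
    and "tooth_at (-3, -1) \<in> \<T> \<or> tooth_at (-1, -3) \<in> \<T>"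
proof -
  have known: "tooth_at 0 \<in> \<T>" using assms(2) by (simp add: tooth_at_def)
  show "tooth_at (-3, 1) \<in> \<T> \<or> tooth_at (-1, 3) \<in> \<T>"
    by (rule corner_tile_translates[OF \<T>, of "-1" 1 "{0}" "(0, 1)"])
      (use known in \<open>auto simp: tooth_eq reflect_def\<close>)
  show "tooth_at (3, 1) \<in> \<T> \<or> tooth_at (1, 3) \<in> \<T>"
    by (rule corner_tile_translates[OF \<T>, of 1 1 "{0}" "(1, 1)"])
      (use known in \<open>auto simp: tooth_eq reflect_def\<close>)
  show "tooth_at (3, -1) \<in> \<T> \<or> tooth_at (1, -3) \<in> \<T>"
    by (rule corner_tile_translates[OF \<T>, of 1 "-1" "{0}" "(1, 0)"])
      (use known in \<open>auto simp: tooth_eq reflect_def\<close>)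
  show "tooth_at (-3, -1) \<in> \<T> \<or> tooth_at (-1, -3) \<in> \<T>"
    by (rule corner_tile_translates[OF \<T>, of "-1" "-1" "{0}" "(0, 0)"])
      (use known in \<open>auto simp: tooth_eq reflect_def\<close>)
qed

lemma no_tooth_pinwheel:
  assumes \<T>: "tiling tooth \<T>" and "tooth \<in> \<T>"
  shows "\<not> (tooth_at (-1, 3) \<in> \<T> \<and> tooth_at (3, 1) \<in> \<T>)"
    and "\<not> (tooth_at (-3, 1) \<in> \<T> \<and> tooth_at (1, 3) \<in> \<T>)"
proof -
  have known: "tooth_at 0 \<in> \<T>" using assms(2) by (simp add: tooth_at_def)
  show "\<not> (tooth_at (-1, 3) \<in> \<T> \<and> tooth_at (3, 1) \<in> \<T>)"
  proof
    assume pinwheel: "tooth_at (-1, 3) \<in> \<T> \<and> tooth_at (3, 1) \<in> \<T>"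
    then have "tooth_at (3, 2) \<in> \<T> \<or> tooth_at (1, 4) \<in> \<T>"
      by (intro corner_tile_translates[OF \<T>, of 1 1 "{0, (3, 1)}" "(1, 2)"])
        (use known in \<open>auto simp: tooth_eq reflect_def\<close>)
    then show False
      using pinwheel tiling_tooth_at_eqI[OF \<T>, of "(3, 2)" "(3, 1)" "(7/2, 3/2)"]
        tiling_tooth_at_eqI[OF \<T>, of "(1, 4)" "(-1, 3)" "(3/2, 7/2)"]
      by (auto simp: inner_tooth_def)
  qed
  show "\<not> (tooth_at (-3, 1) \<in> \<T> \<and> tooth_at (1, 3) \<in> \<T>)"
  proof
    assume pinwheel: "tooth_at (-3, 1) \<in> \<T> \<and> tooth_at (1, 3) \<in> \<T>"
    then have "tooth_at (-3, 2) \<in> \<T> \<or> tooth_at (-1, 4) \<in> \<T>"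
      by (intro corner_tile_translates[OF \<T>, of "-1" 1 "{0, (-3, 1)}" "(0, 2)"])
        (use known in \<open>auto simp: tooth_eq reflect_def\<close>)
    then show False
      using pinwheel tiling_tooth_at_eqI[OF \<T>, of "(-3, 2)" "(-3, 1)" "(-5/2, 3/2)"]
        tiling_tooth_at_eqI[OF \<T>, of "(-1, 4)" "(1, 3)" "(-1/2, 7/2)"]
      by (auto simp: inner_tooth_def)
  qed
qed

theorem lemma2p1:
  shows "\<not> tiles_plane tooth"
proof
  assume "tiles_plane tooth"
  then obtain \<T> where \<T>: "tiling tooth \<T>" "tooth \<in> \<T>"
    using tiling_containing_prototile unfolding tiles_plane_iff_tiling by metis
  have "\<not> (tooth_at (-1, 3) \<in> \<T> \<and> tooth_at (1, 3) \<in> \<T>)"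
    and "\<not> (tooth_at (3, 1) \<in> \<T> \<and> tooth_at (3, -1) \<in> \<T>)"
    and "\<not> (tooth_at (1, -3) \<in> \<T> \<and> tooth_at (-1, -3) \<in> \<T>)"
    and "\<not> (tooth_at (-3, -1) \<in> \<T> \<and> tooth_at (-3, 1) \<in> \<T>)"
    using tiling_tooth_at_eqI[OF \<T>(1), of "(-1, 3)" "(1, 3)" "(1/2, 7/2)"]
      tiling_tooth_at_eqI[OF \<T>(1), of "(3, 1)" "(3, -1)" "(7/2, 1/2)"]
      tiling_tooth_at_eqI[OF \<T>(1), of "(1, -3)" "(-1, -3)" "(1/2, -5/2)"]
      tiling_tooth_at_eqI[OF \<T>(1), of "(-3, -1)" "(-3, 1)" "(-5/2, 1/2)"]
    by (auto simp: inner_tooth_def)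
  then show False
    using tooth_neighbours[OF \<T>] no_tooth_pinwheel[OF \<T>] by blast
qed

end
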